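(* Let $f:\mathbb{R}^d\to\mathbb{R}$ and $P:\mathbb{R}^d\to\mathbb{R}^s$ be continuously differentiable, $D\subseteq\mathbb{R}^s$ closed, $\Omega=\{z\mid P(z)\in D\}$, and let $\bar z\in\Omega$ be B-stationary for the problem $\min f(z)$ s.t. $P(z)\in D$. Assume that GGCQ holds at $\bar z$ and that the mapping $u\rightrightarrows\nabla P(\bar z)u-T_D(P(\bar z))$ is metrically subregular at $(0,0)$. Then there exist a natural number $k\ge0$, directions $u_1,\dots,u_k\in\mathbb{R}^d$, a direction $w\in T^k_D(P(\bar z);\nabla P(\bar z)u_1,\dots,\nabla P(\bar z)u_k)$ and a multiplier $w^\ast\in\widehat N_{T^k_D(P(\bar z);\nabla P(\bar z)u_1,\dots,\nabla P(\bar z)u_k)}(w)$ such that \[\nabla f(\bar z)+\nabla P(\bar z)^\ast w^\ast=0.\] Moreover, for every $l=1,\dots,k$ we have $u_l\in T^{{\rm lin},l-1}_{P,D}(\bar z;u_1,\dots,u_{l-1})$, $\nabla P(\bar z)u_l\notin\operatorname{Lsp}(T^{l-1}_D(P(\bar z);\nabla P(\bar z)u_1,\dots,\nabla P(\bar z)u_{l-1}))$, $\langle\nabla f(\bar z),u_l\rangle=0$, and $T^{l-1}_D(P(\bar z);\nabla P(\bar z)u_1,\dots,\nabla P(\bar z)u_{l-1})$ is not locally polyhedral near $\nabla P(\bar z)u_l$.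
   Context: Tangent cone: $T_\Omega(\bar z)=\{w\mid \exists t_k\downarrow0,\ w_k\to w,\ \bar z+t_kw_k\in\Omega\}$, with $T_\Omega(\bar z)=\emptyset$ if $\bar z\notin\Omega$. Polar cone $K^\ast=\{z^\ast\mid\langle z^\ast,w\rangle\le0\ \forall w\in K\}$; regular normal cone $\widehat N_\Omega(\bar z)=(T_\Omega(\bar z))^\ast$ (empty if $\bar z\notin\Omega$). Higher-order tangent cones: for $\bar y\in D$ and directions $v_1,v_2,\dots$, $T^0_D(\bar y)=T_D(\bar y)$ and $T^k_D(\bar y;v_1,\dots,v_k)=T_{T^{k-1}_D(\bar y;v_1,\dots,v_{k-1})}(v_k)$ for $k\ge1$. Higher-order linearized tangent cones: $T^{{\rm lin},0}_{P,D}(\bar z)=\{u\mid\nabla P(\bar z)u\in T_D(P(\bar z))\}=:T^{\rm lin}_{P,D}(\bar z)$ and $T^{{\rm lin},k}_{P,D}(\bar z;u_1,\dots,u_k)=\{u\mid\nabla P(\bar z)u\in T^k_D(P(\bar z);\nabla P(\bar z)u_1,\dots,\nabla P(\bar z)u_k)\}$. $\bar z$ is B-stationary if $0\in\nabla f(\bar z)+\widehat N_\Omega(\bar z)$. GGCQ holds at $\bar z$ if $\widehat N_\Omega(\bar z)=(T^{\rm lin}_{P,D}(\bar z))^\ast$. A mapping $M$ is metrically subregular at $(\bar z,\bar w)\in\operatorname{gph}M$ if there are a neighborhood $W$ of $\bar z$ and $\kappa>0$ with $\operatorname{dist}(z,M^{-1}(\bar w))\le\kappa\operatorname{dist}(\bar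 w,M(z))$ for $z\in W$. For a cone $C$, $\operatorname{Lsp}(C)$ is the largest linear subspace $L$ with $C+L\subseteq C$. A set is polyhedral if it is a finite union of finite intersections of closed halfspaces; $\Omega$ is locally polyhedral near $\bar z\in\Omega$ if $\Omega\cap W=C\cap W$ for some neighborhood $W$ of $\bar z$ and polyhedral $C$. *)

theory Defs
  imports "HOL-Analysis.Analysis"
begin

definition tcone :: "'a::euclidean_space set \<Rightarrow> 'a \<Rightarrow> 'a set" where
  "tcone \<Omega> z = (if z \<in> \<Omega> then
     {w. \<exists>t :: nat \<Rightarrow> real. \<exists>ws :: nat \<Rightarrow> 'a.
          (\<forall>k. t k > 0) \<and> t \<longlonglongrightarrow> 0 \<and> ws \<longlonglongrightarrow> w \<and> (\<forall>k. z + t k *\<^sub>R ws k \<in> \<Omega>)}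
     else {})"

definition polar :: "'a::euclidean_space set \<Rightarrow> 'a set" where
  "polar K = {zs. \<forall>w\<in>K. zs \<bullet> w \<le> 0}"

definition rnormal :: "'a::euclidean_space set \<Rightarrow> 'a \<Rightarrow> 'a set" where
  "rnormal \<Omega> z = (if z \<in> \<Omega> then polar (tcone \<Omega> z) else {})"

text \<open>Higher-order tangent cone: htcone D y [v1,...,vk] = T^k_D(y; v1,...,vk),
  with T^0_D(y) = T_D(y) and T^k = T_{T^(k-1)}(v_k).\<close>
definition htcone :: "'a::euclidean_space set \<Rightarrow> 'a \<Rightarrow> 'a list \<Rightarrow> 'a set" where
  "htcone D y vs = foldl (\<lambda>C v. tcone C v) (tcone D y) vs"

text \<open>Higher-order linearized tangent cone T^{lin,k}_{P,D}(z; u1,...,uk),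
  where P' is the derivative of P at z (for us = [] this is T^lin_{P,D}(z)).\<close>
definition hlincone :: "('a::euclidean_space \<Rightarrow> 'b::euclidean_space) \<Rightarrow> ('a \<Rightarrow> 'b)
     \<Rightarrow> 'b set \<Rightarrow> 'a \<Rightarrow> 'a list \<Rightarrow> 'a set" where
  "hlincone P P' D z us = {u. P' u \<in> htcone D (P z) (map P' us)}"

definition Lsp :: "'a::euclidean_space set \<Rightarrow> 'a set" where
  "Lsp C = (THE L. subspace L \<and> (\<forall>c\<in>C. \<forall>l\<in>L. c + l \<in> C) \<and>
              (\<forall>L'. subspace L' \<and> (\<forall>c\<in>C. \<forall>l\<in>L'. c + l \<in> C) \<longrightarrow> L' \<subseteq> L))"

definition polyhedral_set :: "'a::euclidean_space set \<Rightarrow> bool" where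
  "polyhedral_set C \<longleftrightarrow> (\<exists>F. finite F \<and> C = \<Union>F \<and>
     (\<forall>S\<in>F. \<exists>H. finite H \<and> S = \<Inter>H \<and>
        (\<forall>h\<in>H. \<exists>a b. a \<noteq> 0 \<and> h = {x. a \<bullet> x \<le> b})))"

definition locally_polyhedral :: "'a::euclidean_space set \<Rightarrow> 'a \<Rightarrow> bool" where
  "locally_polyhedral \<Omega> z \<longleftrightarrow> z \<in> \<Omega> \<and>
     (\<exists>W C. open W \<and> z \<in> W \<and> polyhedral_set C \<and> \<Omega> \<inter> W = C \<inter> W)"

text \<open>Metric subregularity of a set-valued map M at (z, w) \<in> gph M.
  The distance to an empty set is +\<infinity> in the paper, so points z with
  M z = {} satisfy the estimate trivially.\<close>
definition metrically_subregular ::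
  "('a::euclidean_space \<Rightarrow> 'b::euclidean_space set) \<Rightarrow> 'a \<Rightarrow> 'b \<Rightarrow> bool" where
  "metrically_subregular M z w \<longleftrightarrow> w \<in> M z \<and>
     (\<exists>W \<kappa>. open W \<and> z \<in> W \<and> \<kappa> > 0 \<and>
        (\<forall>x\<in>W. M x \<noteq> {} \<longrightarrow> infdist x {y. w \<in> M y} \<le> \<kappa> * infdist w (M x)))"

end

theory Submission
  imports Defs
begin

text \<open>
  Write A for the derivative of P at zbar, K = T_D(P zbar) and g for the gradient of f at zbar.
  B-stationarity and GGCQ say that g \<bullet> u \<ge> 0 whenever A u \<in> K, and metric subregularity
  upgrades this to an exact penalty: g \<bullet> u + c * dist (A u) y \<ge> 0 for all u and all y \<in> K.
  For the least such c a compactness argument produces a zero (u, y) of the penalty that is not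
  a trivial one, i.e. not of the form (u, A u) with A u in the lineality space of K and g \<bullet> u = 0.
  If A u \<noteq> y, then y is a point of K nearest to A u and differentiating the penalty in u turns
  the direction A u - y into a multiplier in the regular normal cone of K at y.
  Otherwise A u \<in> K lies outside the lineality space of K and g \<bullet> u = 0; replacing K by its
  tangent cone at A u preserves the exact penalty and adds A u to the lineality space, so this
  can happen only finitely often. If K is locally polyhedral at A u, every tangent cone of
  T_K(A u) is a tangent cone of K, so the chain stops there and the multiplier obtained for
  T_K(A u) serves for K itself; this is why all recorded directions are non-polyhedral.
\<close>

section \<open>Tangent cones\<close>

lemma cone_scaleR_iff:
  assumes "cone Q" "c > 0" shows "c *\<^sub>R x \<in> Q \<longleftrightarrow> x \<in> Q"
  using mem_cone[OF assms(1), of "c *\<^sub>R x" "inverse c"] mem_cone[OF assms(1), of x c] assms(2)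
  by auto

lemma tconeI:
  assumes "z \<in> S" "\<forall>k. t k > 0" "t \<longlonglongrightarrow> 0" "ws \<longlonglongrightarrow> w" "\<forall>k. z + t k *\<^sub>R ws k \<in> S"
  shows "w \<in> tcone S z"
  using assms unfolding tcone_def by auto

lemma tconeE:
  assumes "w \<in> tcone S z"
  obtains t :: "nat \<Rightarrow> real" and ws
  where "z \<in> S" "\<forall>k. t k > 0" "t \<longlonglongrightarrow> 0" "ws \<longlonglongrightarrow> w" "\<forall>k. z + t k *\<^sub>R ws k \<in> S"
  using assms unfolding tcone_def by (auto split: if_splits)

lemma tcone_empty: "z \<notin> S \<Longrightarrow> tcone S z = {}"
  unfolding tcone_def by simp

lemma tcone_eventuallyI:
  assumes "z \<in> S" "t \<longlonglongrightarrow> 0" "ws \<longlonglongrightarrow> w"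
    and "\<forall>\<^sub>F k in sequentially. t k > 0 \<and> z + t k *\<^sub>R ws k \<in> S"
  shows "w \<in> tcone S z"
proof -
  obtain N where "\<And>k. k \<ge> N \<Longrightarrow> t k > 0 \<and> z + t k *\<^sub>R ws k \<in> S"
    using assms(4) by (auto simp: eventually_sequentially)
  then show ?thesis
    by (intro tconeI[of _ _ "\<lambda>k. t (k + N)" "\<lambda>k. ws (k + N)"])
      (use assms in \<open>auto intro: LIMSEQ_ignore_initial_segment\<close>)
qed

lemma in_tcone_iff:
  assumes "z \<in> S"
  shows "w \<in> tcone S z \<longleftrightarrow>
    (\<forall>e>0. \<exists>t v. 0 < t \<and> t < e \<and> norm (v - w) < e \<and> z + t *\<^sub>R v \<in> S)"
    (is "_ \<longleftrightarrow> ?approx")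
proof
  assume "w \<in> tcone S z"
  then obtain t ws where t: "\<forall>k. t k > 0" "t \<longlonglongrightarrow> 0" "ws \<longlonglongrightarrow> w" "\<forall>k. z + t k *\<^sub>R ws k \<in> S"
    by (rule tconeE)
  show ?approx
  proof (intro allI impI)
    fix e :: real assume "e > 0"
    have "\<forall>\<^sub>F k in sequentially. t k < e \<and> dist (ws k) w < e"
      using order_tendstoD(2)[OF t(2) \<open>e > 0\<close>] tendstoD[OF t(3) \<open>e > 0\<close>] by (rule eventually_conj)
    then obtain k where "t k < e" "norm (ws k - w) < e"
      by (auto simp: eventually_sequentially dist_norm)
    then show "\<exists>t v. 0 < t \<and> t < e \<and> norm (v - w) < e \<and> z + t *\<^sub>R v \<in> S"
      using t(1,4) by blast
  qed
next
  assume approx: ?approx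
  have "\<exists>t v. 0 < t \<and> t < inverse (Suc n) \<and> norm (v - w) < inverse (Suc n) \<and> z + t *\<^sub>R v \<in> S"
    for n :: nat
    using approx[rule_format, of "inverse (Suc n)"] by simp
  then obtain T V where TV: "\<And>n::nat. 0 < T n \<and> T n < inverse (Suc n) \<and>
      norm (V n - w) < inverse (Suc n) \<and> z + T n *\<^sub>R V n \<in> S"
    by metis
  have lim: "(\<lambda>n. inverse (real (Suc n))) \<longlonglongrightarrow> 0"
    by (rule LIMSEQ_inverse_real_of_nat)
  have "T \<longlonglongrightarrow> 0"
    by (rule tendsto_sandwich[OF _ _ tendsto_const lim]) (use TV in \<open>auto intro!: always_eventually less_imp_le\<close>)
  moreover have "(\<lambda>n. norm (V n - w)) \<longlonglongrightarrow> 0"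
    by (rule tendsto_sandwich[OF _ _ tendsto_const lim]) (use TV in \<open>auto intro!: always_eventually less_imp_le\<close>)
  then have "V \<longlonglongrightarrow> w"
    by (simp add: LIM_zero_cancel tendsto_norm_zero_iff)
  ultimately show "w \<in> tcone S z"
    using assms TV by (intro tconeI) auto
qed

lemma zero_in_tcone:
  assumes "z \<in> S" shows "0 \<in> tcone S z"
proof -
  have "\<exists>t v. 0 < t \<and> t < e \<and> norm (v - 0) < e \<and> z + t *\<^sub>R v \<in> S" if "e > 0" for e
    using assms that by (intro exI[of _ "e / 2"] exI[of _ 0]) auto
  then show ?thesis
    unfolding in_tcone_iff[OF assms] by blast
qed

lemma cone_tcone: "cone (tcone S z)"
  unfolding cone_def
proof (intro ballI allI impI)
  fix w and c :: real
  assume "w \<in> tcone S z" "c \<ge> 0"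
  then obtain t ws where t: "z \<in> S" "\<forall>k. t k > 0" "t \<longlonglongrightarrow> 0" "ws \<longlonglongrightarrow> w"
    "\<forall>k. z + t k *\<^sub>R ws k \<in> S"
    by (elim tconeE)
  show "c *\<^sub>R w \<in> tcone S z"
  proof (cases "c = 0")
    case True
    with t(1) show ?thesis by (simp add: zero_in_tcone)
  next
    case False
    with \<open>c \<ge> 0\<close> have "c > 0" by simp
    show ?thesis
    proof (rule tconeI[OF t(1), of "\<lambda>k. t k / c" "\<lambda>k. c *\<^sub>R ws k"])
      show "(\<lambda>k. t k / c) \<longlonglongrightarrow> 0" "(\<lambda>k. c *\<^sub>R ws k) \<longlonglongrightarrow> c *\<^sub>R w"
        using t(3,4) by (auto intro: tendsto_divide_zero tendsto_scaleR)
    qed (use t \<open>c > 0\<close> in auto)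
  qed
qed

lemma closed_tcone: "closed (tcone S z)"
proof (cases "z \<in> S")
  case False
  then show ?thesis by (simp add: tcone_empty)
next
  case z: True
  have "x \<in> tcone S z" if "x \<in> closure (tcone S z)" for x
    unfolding in_tcone_iff[OF z]
  proof (intro allI impI)
    fix e :: real assume "e > 0"
    then obtain y where y: "y \<in> tcone S z" "dist y x < e / 2"
      using \<open>x \<in> closure (tcone S z)\<close> closure_approachable half_gt_zero by blast
    then obtain t v where tv: "0 < t" "t < e / 2" "norm (v - y) < e / 2" "z + t *\<^sub>R v \<in> S"
      using \<open>e > 0\<close> half_gt_zero in_tcone_iff[OF z] by blast
    have "norm (v - x) \<le> norm (v - y) + dist y x"
      by (metis dist_norm dist_triangle)
    with y(2) tv show "\<exists>t v. 0 < t \<and> t < e \<and> norm (v - x) < e \<and> z + t *\<^sub>R v \<in> S"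
      by (intro exI[of _ t] exI[of _ v]) auto
  qed
  then show ?thesis
    using closure_subset_eq by blast
qed

lemma tcone_translate: "tcone {x. x - y \<in> Q} (y + z) = tcone Q z"
  unfolding tcone_def by (simp add: algebra_simps)

lemma tcone_scaleR_base:
  assumes Q: "cone Q" and "c > 0"
  shows "tcone Q (c *\<^sub>R z) = tcone Q z"
proof -
  have grow: "tcone Q z \<subseteq> tcone Q (c *\<^sub>R z)" if "c > 0" for c z
  proof
    fix w assume "w \<in> tcone Q z"
    then obtain t ws where t: "z \<in> Q" "\<forall>k. t k > 0" "t \<longlonglongrightarrow> 0" "ws \<longlonglongrightarrow> w"
      "\<forall>k. z + t k *\<^sub>R ws k \<in> Q"
      by (elim tconeE)
    show "w \<in> tcone Q (c *\<^sub>R z)"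
    proof (rule tconeI[of _ _ "\<lambda>k. c * t k" ws])
      show "(\<lambda>k. c * t k) \<longlonglongrightarrow> 0"
        using tendsto_mult[OF tendsto_const t(3), of c] by simp
      show "\<forall>k. c *\<^sub>R z + (c * t k) *\<^sub>R ws k \<in> Q"
      proof
        fix k
        have "c *\<^sub>R (z + t k *\<^sub>R ws k) \<in> Q"
          using t(5) cone_scaleR_iff[OF Q that] by blast
        then show "c *\<^sub>R z + (c * t k) *\<^sub>R ws k \<in> Q"
          by (simp add: scaleR_add_right)
      qed
    qed (use t that cone_scaleR_iff[OF Q that] in auto)
  qed
  have "tcone Q (c *\<^sub>R z) \<subseteq> tcone Q (inverse c *\<^sub>R (c *\<^sub>R z))"
    by (rule grow) (use assms(2) in simp)
  also have "inverse c *\<^sub>R (c *\<^sub>R z) = z"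
    using assms(2) by simp
  finally show ?thesis
    using grow[OF assms(2)] by blast
qed

lemma tcone_cong_ball:
  assumes "\<rho> > 0" "\<And>x. x \<in> ball w \<rho> \<Longrightarrow> x \<in> S \<longleftrightarrow> x \<in> S'"
  shows "tcone S w = tcone S' w"
proof -
  have shrink: "tcone S w \<subseteq> tcone S' w" if agree: "\<And>x. x \<in> ball w \<rho> \<Longrightarrow> x \<in> S \<longleftrightarrow> x \<in> S'"
    for S S'
  proof
    fix d assume "d \<in> tcone S w"
    then obtain t ws where t: "w \<in> S" "\<forall>k. t k > 0" "t \<longlonglongrightarrow> 0" "ws \<longlonglongrightarrow> d"
      "\<forall>k. w + t k *\<^sub>R ws k \<in> S"
      by (elim tconeE)
    have "(\<lambda>k. w + t k *\<^sub>R ws k) \<longlonglongrightarrow> w + 0 *\<^sub>R d"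
      by (intro tendsto_intros t)
    then have "\<forall>\<^sub>F k in sequentially. w + t k *\<^sub>R ws k \<in> ball w \<rho>"
      using \<open>\<rho> > 0\<close> by (intro topological_tendstoD) auto
    then have "\<forall>\<^sub>F k in sequentially. t k > 0 \<and> w + t k *\<^sub>R ws k \<in> S'"
      by eventually_elim (use t agree in auto)
    moreover have "w \<in> S'"
      using agree[of w] t(1) \<open>\<rho> > 0\<close> by simp
    ultimately show "d \<in> tcone S' w"
      using t(3,4) by (intro tcone_eventuallyI)
  qed
  show ?thesis
    using shrink[OF assms(2)] shrink[of S' S] assms(2) by blast
qed

section \<open>Lineality spaces of cones\<close>

definition lineality :: "'a::real_vector set \<Rightarrow> 'a set" where
  "lineality K = {l. \<forall>c\<in>K. c + l \<in> K \<and> c - l \<in> K}"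

lemma subspace_lineality:
  assumes "cone K"
  shows "subspace (lineality K)"
proof -
  have neg: "- l \<in> lineality K" if "l \<in> lineality K" for l
    using that by (simp add: lineality_def)
  have pos: "r *\<^sub>R l \<in> lineality K" if l: "l \<in> lineality K" and "r > 0" for l r
  proof -
    have "c + r *\<^sub>R l \<in> K \<and> c - r *\<^sub>R l \<in> K" if "c \<in> K" for c
    proof -
      have "inverse r *\<^sub>R c \<in> K"
        using that assms \<open>r > 0\<close> by (simp add: cone_scaleR_iff)
      with l have "inverse r *\<^sub>R c + l \<in> K" "inverse r *\<^sub>R c - l \<in> K"
        by (simp_all add: lineality_def)
      then have "r *\<^sub>R (inverse r *\<^sub>R c + l) \<in> K" "r *\<^sub>R (inverse r *\<^sub>R c - l) \<in> K"
        using assms \<open>r > 0\<close> by (simp_all add: cone_scaleR_iff)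
      with \<open>r > 0\<close> show ?thesis
        by (simp add: scaleR_add_right scaleR_diff_right)
    qed
    then show ?thesis by (simp add: lineality_def)
  qed
  have scale: "r *\<^sub>R l \<in> lineality K" if "l \<in> lineality K" for l r
  proof -
    consider "r > 0" | "r = 0" | "r < 0" by linarith
    then show ?thesis
    proof cases
      case 2
      then show ?thesis by (simp add: lineality_def)
    next
      case 3
      then have "(- r) *\<^sub>R (- l) \<in> lineality K"
        using pos[OF neg[OF that], of "- r"] by simp
      then show ?thesis by simp
    qed (use pos that in blast)
  qed
  have add: "x + y \<in> lineality K" if x: "x \<in> lineality K" and y: "y \<in> lineality K" for x y
  proof -
    have "c + (x + y) \<in> K \<and> c - (x + y) \<in> K" if "c \<in> K" for c
    proof -
      from that x have "c + x \<in> K" "c - x \<in> K"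
        by (simp_all add: lineality_def)
      with y have "(c + x) + y \<in> K" "(c - x) - y \<in> K"
        by (simp_all add: lineality_def)
      then show ?thesis
        by (simp add: algebra_simps)
    qed
    then show ?thesis by (simp add: lineality_def)
  qed
  have "0 \<in> lineality K"
    by (simp add: lineality_def)
  with add scale show ?thesis
    by (simp add: subspace_def)
qed

lemma Lsp_eq_lineality:
  assumes "cone K"
  shows "Lsp K = lineality K"
  unfolding Lsp_def
proof (rule the_equality)
  have translation: "\<forall>c\<in>K. \<forall>l\<in>lineality K. c + l \<in> K"
    by (simp add: lineality_def)
  have largest: "L \<subseteq> lineality K" if L: "subspace L" "\<forall>c\<in>K. \<forall>l\<in>L. c + l \<in> K" for L
  proof
    fix l assume "l \<in> L"
    with L have "c + l \<in> K" "c + - l \<in> K" if "c \<in> K" for c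
      using that subspace_neg by blast+
    then show "l \<in> lineality K"
      by (simp add: lineality_def)
  qed
  show "subspace (lineality K) \<and> (\<forall>c\<in>K. \<forall>l\<in>lineality K. c + l \<in> K) \<and>
    (\<forall>L'. subspace L' \<and> (\<forall>c\<in>K. \<forall>l\<in>L'. c + l \<in> K) \<longrightarrow> L' \<subseteq> lineality K)"
    using subspace_lineality[OF assms] translation largest by blast
  show "L = lineality K" if "subspace L \<and> (\<forall>c\<in>K. \<forall>l\<in>L. c + l \<in> K) \<and>
    (\<forall>L'. subspace L' \<and> (\<forall>c\<in>K. \<forall>l\<in>L'. c + l \<in> K) \<longrightarrow> L' \<subseteq> L)" for L
  proof (rule subset_antisym)
    show "L \<subseteq> lineality K"
      using that largest by blast
    show "lineality K \<subseteq> L"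
      using that subspace_lineality[OF assms] translation by blast
  qed
qed

lemma tcone_add_lineality:
  assumes "d \<in> tcone K y" "l \<in> lineality K" "cone K"
  shows "d + l \<in> tcone K y"
proof -
  obtain t ws where t: "y \<in> K" "\<forall>k. t k > 0" "t \<longlonglongrightarrow> 0" "ws \<longlonglongrightarrow> d"
    "\<forall>k. y + t k *\<^sub>R ws k \<in> K"
    using assms(1) by (elim tconeE)
  have "t k *\<^sub>R l \<in> lineality K" for k
    using subspace_lineality[OF assms(3)] assms(2) by (simp add: subspace_scale)
  then have "(y + t k *\<^sub>R ws k) + t k *\<^sub>R l \<in> K" for k
    using t(5) unfolding lineality_def by blast
  then have "\<forall>k. y + t k *\<^sub>R (ws k + l) \<in> K"
    by (simp add: algebra_simps)
  with t show ?thesis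
    by (intro tconeI[of _ _ t "\<lambda>k. ws k + l"]) (auto intro: tendsto_add)
qed

lemma lineality_subset_lineality_tcone:
  assumes "cone K"
  shows "lineality K \<subseteq> lineality (tcone K y)"
proof
  fix l assume "l \<in> lineality K"
  moreover have "- l \<in> lineality K"
    using \<open>l \<in> lineality K\<close> by (simp add: lineality_def)
  ultimately show "l \<in> lineality (tcone K y)"
    using tcone_add_lineality[OF _ \<open>l \<in> lineality K\<close> assms]
      tcone_add_lineality[OF _ \<open>- l \<in> lineality K\<close> assms]
    by (auto simp: lineality_def)
qed

lemma tcone_add_base:
  assumes "cone K" "d \<in> tcone K y"
  shows "d + s *\<^sub>R y \<in> tcone K y"
proof -
  obtain t ws where t: "y \<in> K" "\<forall>k. t k > 0" "t \<longlonglongrightarrow> 0" "ws \<longlonglongrightarrow> d"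
    "\<forall>k. y + t k *\<^sub>R ws k \<in> K"
    using assms(2) by (elim tconeE)
  define \<tau> where "\<tau> k = t k / (1 - s * t k)" for k
  have "(\<lambda>k. 1 - s * t k) \<longlonglongrightarrow> 1 - s * 0"
    by (intro tendsto_intros t)
  then have "\<forall>\<^sub>F k in sequentially. 1 - s * t k > 0"
    by (intro order_tendstoD) auto
  then have "\<forall>\<^sub>F k in sequentially. \<tau> k > 0 \<and> y + \<tau> k *\<^sub>R (ws k + s *\<^sub>R y) \<in> K"
  proof eventually_elim
    case (elim k)
    have coeffs: "1 + \<tau> k * s = inverse (1 - s * t k)" "\<tau> k = inverse (1 - s * t k) * t k"
      using elim by (simp_all add: \<tau>_def field_simps)
    have "y + \<tau> k *\<^sub>R (ws k + s *\<^sub>R y) = (1 + \<tau> k * s) *\<^sub>R y + \<tau> k *\<^sub>R ws k"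
      by (simp add: algebra_simps)
    also have "\<dots> = inverse (1 - s * t k) *\<^sub>R y + (inverse (1 - s * t k) * t k) *\<^sub>R ws k"
      by (subst coeffs(1)) (simp add: coeffs(2))
    also have "\<dots> = inverse (1 - s * t k) *\<^sub>R (y + t k *\<^sub>R ws k)"
      by (simp add: algebra_simps)
    finally show ?case
      using elim t(2,5) assms(1) by (simp add: \<tau>_def cone_scaleR_iff)
  qed
  moreover have "\<tau> \<longlonglongrightarrow> 0 / (1 - s * 0)"
    unfolding \<tau>_def by (intro tendsto_intros t) simp
  ultimately show ?thesis
    using t(1,4) by (intro tcone_eventuallyI) (auto intro: tendsto_intros)
qed

lemma base_in_lineality_tcone:
  assumes "cone K"
  shows "y \<in> lineality (tcone K y)"
  using tcone_add_base[OF assms, of _ y 1] tcone_add_base[OF assms, of _ y "- 1"]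
  by (auto simp: lineality_def)

lemma dim_lineality_tcone_less:
  assumes "cone K" "y \<notin> lineality K"
  shows "dim (lineality K) < dim (lineality (tcone K y))"
proof -
  have "lineality K \<subset> lineality (tcone K y)"
    using lineality_subset_lineality_tcone[OF assms(1)] base_in_lineality_tcone[OF assms(1)] assms(2)
    by blast
  then show ?thesis
    using subspace_lineality[OF assms(1)] subspace_lineality[OF cone_tcone]
    by (metis dim_psubset span_eq_iff)
qed

section \<open>Locally polyhedral sets\<close>

text \<open>Within the ball, S coincides with a cone with apex y.\<close>

definition ray_closed_in_ball :: "'a::real_normed_vector set \<Rightarrow> 'a \<Rightarrow> real \<Rightarrow> bool" where
  "ray_closed_in_ball S y \<delta> \<longleftrightarrow> (\<forall>x\<in>S \<inter> ball y \<delta>. \<forall>r\<ge>0.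
     y + r *\<^sub>R (x - y) \<in> ball y \<delta> \<longrightarrow> y + r *\<^sub>R (x - y) \<in> S)"

lemma ray_closed_in_ballD:
  "ray_closed_in_ball S y \<delta> \<Longrightarrow> x \<in> S \<Longrightarrow> x \<in> ball y \<delta> \<Longrightarrow> r \<ge> 0 \<Longrightarrow>
    y + r *\<^sub>R (x - y) \<in> ball y \<delta> \<Longrightarrow> y + r *\<^sub>R (x - y) \<in> S"
  unfolding ray_closed_in_ball_def by blast

lemma ray_closed_in_ball_cong:
  assumes "\<And>x. x \<in> ball y \<delta> \<Longrightarrow> x \<in> S \<longleftrightarrow> x \<in> S'"
  shows "ray_closed_in_ball S y \<delta> \<longleftrightarrow> ray_closed_in_ball S' y \<delta>"
  using assms unfolding ray_closed_in_ball_def by blast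

lemma ray_closed_in_ball_const:
  assumes "\<And>x. x \<in> ball y \<delta> \<Longrightarrow> x \<in> S \<longleftrightarrow> y \<in> S"
  shows "ray_closed_in_ball S y \<delta>"
  using assms unfolding ray_closed_in_ball_def by blast

lemma eventually_ray_closed_in_ball_halfspace:
  fixes a :: "'a::real_inner"
  shows "\<forall>\<^sub>F \<delta> in at_right 0. ray_closed_in_ball {x. a \<bullet> x \<le> b} y \<delta>"
proof (cases "a \<bullet> y = b")
  case True
  have "a \<bullet> (y + r *\<^sub>R (x - y)) \<le> b" if "a \<bullet> x \<le> b" "r \<ge> 0" for x r
  proof -
    have "a \<bullet> (y + r *\<^sub>R (x - y)) = b + r * (a \<bullet> x - b)"
      using True by (simp add: inner_add_right inner_diff_right)
    also have "\<dots> \<le> b"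
      using that by (simp add: mult_nonneg_nonpos)
    finally show ?thesis .
  qed
  then show ?thesis
    by (intro always_eventually) (auto simp: ray_closed_in_ball_def)
next
  case False
  define \<delta>\<^sub>0 where "\<delta>\<^sub>0 = \<bar>b - a \<bullet> y\<bar> / (norm a + 1)"
  have "\<delta>\<^sub>0 > 0"
    using False by (simp add: \<delta>\<^sub>0_def add_nonneg_pos)
  have same_side: "x \<in> {x. a \<bullet> x \<le> b} \<longleftrightarrow> y \<in> {x. a \<bullet> x \<le> b}" if "x \<in> ball y \<delta>\<^sub>0" for x
  proof -
    have "\<bar>a \<bullet> x - a \<bullet> y\<bar> \<le> norm a * dist x y"
      using Cauchy_Schwarz_ineq2[of a "x - y"] by (simp add: inner_diff_right dist_norm)
    also have "\<dots> \<le> norm a * \<delta>\<^sub>0"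
      using that by (simp add: dist_commute mult_left_mono less_imp_le)
    also have "\<dots> = norm a * \<bar>b - a \<bullet> y\<bar> / (norm a + 1)"
      by (simp add: \<delta>\<^sub>0_def)
    also have "\<dots> < \<bar>b - a \<bullet> y\<bar>"
      using False by (simp add: pos_divide_less_eq add_nonneg_pos)
    finally have "a \<bullet> x \<le> b \<longleftrightarrow> a \<bullet> y \<le> b"
      by linarith
    then show ?thesis
      by simp
  qed
  have "ray_closed_in_ball {x. a \<bullet> x \<le> b} y \<delta>" if "\<delta> < \<delta>\<^sub>0" for \<delta>
    using that by (intro ray_closed_in_ball_const same_side) simp
  with \<open>\<delta>\<^sub>0 > 0\<close> show ?thesis
    unfolding eventually_at_right_field by blast
qed

lemma ray_closed_in_ball_Inter:
  "(\<And>S. S \<in> H \<Longrightarrow> ray_closed_in_ball S y \<delta>) \<Longrightarrow> ray_closed_in_ball (\<Inter>H) y \<delta>"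
  unfolding ray_closed_in_ball_def by blast

lemma ray_closed_in_ball_Union:
  "(\<And>S. S \<in> F \<Longrightarrow> ray_closed_in_ball S y \<delta>) \<Longrightarrow> ray_closed_in_ball (\<Union>F) y \<delta>"
  unfolding ray_closed_in_ball_def by blast

lemma polyhedral_setE:
  assumes "polyhedral_set C"
  obtains F where "finite F" "C = \<Union>F"
    "\<forall>S\<in>F. \<exists>H. finite H \<and> S = \<Inter>H \<and> (\<forall>h\<in>H. \<exists>a b. a \<noteq> 0 \<and> h = {x. a \<bullet> x \<le> b})"
  using assms unfolding polyhedral_set_def by blast

lemma eventually_ray_closed_in_ball_polyhedral:
  assumes "polyhedral_set C"
  shows "\<forall>\<^sub>F \<delta> in at_right 0. ray_closed_in_ball C y \<delta>"
proof -
  obtain F where F: "finite F" "C = \<Union>F"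
    "\<forall>S\<in>F. \<exists>H. finite H \<and> S = \<Inter>H \<and> (\<forall>h\<in>H. \<exists>a b. a \<noteq> 0 \<and> h = {x. a \<bullet> x \<le> b})"
    using assms by (rule polyhedral_setE)
  have "\<forall>S\<in>F. \<forall>\<^sub>F \<delta> in at_right 0. ray_closed_in_ball S y \<delta>"
  proof
    fix S assume "S \<in> F"
    obtain H where H: "finite H" "S = \<Inter>H"
      "\<forall>h\<in>H. \<exists>a b. a \<noteq> 0 \<and> h = {x. a \<bullet> x \<le> b}"
      using bspec[OF F(3) \<open>S \<in> F\<close>] by (elim exE conjE) (rule that)
    have "\<forall>h\<in>H. \<forall>\<^sub>F \<delta> in at_right 0. ray_closed_in_ball h y \<delta>"
    proof
      fix h assume "h \<in> H"
      obtain a b where "h = {x. a \<bullet> x \<le> b}"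
        using bspec[OF H(3) \<open>h \<in> H\<close>] by (elim exE conjE) (rule that)
      then show "\<forall>\<^sub>F \<delta> in at_right 0. ray_closed_in_ball h y \<delta>"
        by (simp only: eventually_ray_closed_in_ball_halfspace)
    qed
    then have "\<forall>\<^sub>F \<delta> in at_right 0. \<forall>h\<in>H. ray_closed_in_ball h y \<delta>"
      by (rule eventually_ball_finite[OF H(1)])
    then show "\<forall>\<^sub>F \<delta> in at_right 0. ray_closed_in_ball S y \<delta>"
      unfolding H(2) by eventually_elim (rule ray_closed_in_ball_Inter, blast)
  qed
  then have "\<forall>\<^sub>F \<delta> in at_right 0. \<forall>S\<in>F. ray_closed_in_ball S y \<delta>"
    by (rule eventually_ball_finite[OF F(1)])
  then show ?thesis
    unfolding F(2) by eventually_elim (rule ray_closed_in_ball_Union, blast)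
qed

lemma polyhedral_set_vimage:
  assumes "polyhedral_set C"
    and halfspace: "\<And>a b. a \<noteq> 0 \<Longrightarrow> \<exists>a' b'. a' \<noteq> 0 \<and> f -` {x. a \<bullet> x \<le> b} = {x. a' \<bullet> x \<le> b'}"
  shows "polyhedral_set (f -` C)"
proof -
  have image_halfspaces: "\<forall>h'\<in>vimage f ` H. \<exists>a b. a \<noteq> 0 \<and> h' = {x. a \<bullet> x \<le> b}"
    if halfspaces: "\<forall>h\<in>H. \<exists>a b. a \<noteq> 0 \<and> h = {x. a \<bullet> x \<le> b}" for H
  proof
    fix h' assume "h' \<in> vimage f ` H"
    then obtain h where "h \<in> H" "h' = f -` h"
      by blast
    moreover obtain a b where "a \<noteq> 0" "h = {x. a \<bullet> x \<le> b}"
      using bspec[OF halfspaces \<open>h \<in> H\<close>] by (elim exE conjE) (rule that)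
    ultimately show "\<exists>a b. a \<noteq> 0 \<and> h' = {x. a \<bullet> x \<le> b}"
      using halfspace by simp
  qed
  obtain F where F: "finite F" "C = \<Union>F"
    "\<forall>S\<in>F. \<exists>H. finite H \<and> S = \<Inter>H \<and> (\<forall>h\<in>H. \<exists>a b. a \<noteq> 0 \<and> h = {x. a \<bullet> x \<le> b})"
    using assms(1) by (rule polyhedral_setE)
  have "\<forall>S'\<in>vimage f ` F. \<exists>H. finite H \<and> S' = \<Inter>H \<and> (\<forall>h\<in>H. \<exists>a b. a \<noteq> 0 \<and> h = {x. a \<bullet> x \<le> b})"
  proof
    fix S' assume "S' \<in> vimage f ` F"
    then obtain S where "S \<in> F" "S' = f -` S"
      by blast
    obtain H where H: "finite H" "S = \<Inter>H" "\<forall>h\<in>H. \<exists>a b. a \<noteq> 0 \<and> h = {x. a \<bullet> x \<le> b}"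
      using bspec[OF F(3) \<open>S \<in> F\<close>] by (elim exE conjE) (rule that)
    have "S' = \<Inter>(vimage f ` H)"
      unfolding \<open>S' = f -` S\<close> H(2) by auto
    with H(1) image_halfspaces[OF H(3)]
    show "\<exists>H. finite H \<and> S' = \<Inter>H \<and> (\<forall>h\<in>H. \<exists>a b. a \<noteq> 0 \<and> h = {x. a \<bullet> x \<le> b})"
      by (intro exI[of _ "vimage f ` H"]) simp
  qed
  moreover have "f -` C = \<Union>(vimage f ` F)"
    using F(2) by (simp add: vimage_Union)
  ultimately show ?thesis
    unfolding polyhedral_set_def using F(1) by (intro exI[of _ "vimage f ` F"]) simp
qed

lemma polyhedral_set_affine_vimage:
  fixes C :: "'a::euclidean_space set"
  assumes "polyhedral_set C" "c \<noteq> 0"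
  shows "polyhedral_set {x. y + c *\<^sub>R x \<in> C}"
proof -
  have "\<exists>a' b'. a' \<noteq> 0 \<and> (\<lambda>x. y + c *\<^sub>R x) -` {x. a \<bullet> x \<le> b} = {x. a' \<bullet> x \<le> b'}"
    if "a \<noteq> 0" for a b
  proof (intro exI conjI)
    show "c *\<^sub>R a \<noteq> 0"
      using that assms(2) by simp
    show "(\<lambda>x. y + c *\<^sub>R x) -` {x. a \<bullet> x \<le> b} = {x. (c *\<^sub>R a) \<bullet> x \<le> b - a \<bullet> y}"
      by (auto simp: inner_add_right algebra_simps)
  qed
  with assms(1) have "polyhedral_set ((\<lambda>x. y + c *\<^sub>R x) -` C)"
    by (rule polyhedral_set_vimage)
  then show ?thesis
    by (simp add: vimage_def)
qed

lemma ray_closed_in_ball_tcone: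
  assumes K: "closed K" "y \<in> K" and ray: "ray_closed_in_ball K y \<delta>" and x: "x \<in> ball y \<delta>"
  shows "x \<in> K \<longleftrightarrow> x - y \<in> tcone K y"
proof
  assume "x \<in> K"
  have "y + inverse (Suc k) *\<^sub>R (x - y) \<in> K" for k
  proof -
    have "dist y (y + inverse (Suc k) *\<^sub>R (x - y)) = inverse (Suc k) * dist y x"
      by (simp add: dist_norm norm_minus_commute)
    also have "\<dots> \<le> dist y x"
      by (intro mult_left_le_one_le) (simp_all add: inverse_le_1_iff)
    finally have "dist y (y + inverse (Suc k) *\<^sub>R (x - y)) \<le> dist y x" .
    with x have "y + inverse (Suc k) *\<^sub>R (x - y) \<in> ball y \<delta>"
      by simp
    with ray \<open>x \<in> K\<close> x show ?thesis
      unfolding ray_closed_in_ball_def by simp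
  qed
  then show "x - y \<in> tcone K y"
    using K(2) LIMSEQ_inverse_real_of_nat by (intro tconeI[of _ _ "\<lambda>k. inverse (Suc k)"]) auto
next
  assume "x - y \<in> tcone K y"
  then obtain t ws where t: "\<forall>k. t k > 0" "t \<longlonglongrightarrow> 0" "ws \<longlonglongrightarrow> x - y"
    "\<forall>k. y + t k *\<^sub>R ws k \<in> K"
    by (elim tconeE)
  have "\<forall>\<^sub>F k in sequentially. t k < 1"
    using t(2) by (intro order_tendstoD) auto
  moreover have "\<forall>\<^sub>F k in sequentially. norm (ws k) < \<delta>"
    using order_tendstoD(2)[OF tendsto_norm[OF t(3)]] x by (simp add: dist_norm norm_minus_commute)
  ultimately have "\<forall>\<^sub>F k in sequentially. y + ws k \<in> K"
  proof eventually_elim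
    case (elim k)
    have "t k > 0"
      using t(1) by simp
    with elim have "norm (t k *\<^sub>R ws k) \<le> norm (ws k)"
      by (simp add: mult_left_le_one_le)
    with elim have "y + t k *\<^sub>R ws k \<in> ball y \<delta>" "y + ws k \<in> ball y \<delta>"
      by (simp_all add: dist_norm)
    moreover have "y + inverse (t k) *\<^sub>R ((y + t k *\<^sub>R ws k) - y) = y + ws k"
      using \<open>t k > 0\<close> by simp
    ultimately show ?case
      using ray_closed_in_ballD[OF ray t(4)[rule_format, of k], of "inverse (t k)"] \<open>t k > 0\<close>
      by simp
  qed
  moreover have "(\<lambda>k. y + ws k) \<longlonglongrightarrow> y + (x - y)"
    using t(3) by (intro tendsto_intros)
  ultimately show "x \<in> K"
    using K(1) by (simp add: Lim_in_closed_set)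
qed

lemma locally_polyhedral_local_cone:
  assumes "closed K" "locally_polyhedral K y"
  obtains \<delta> C where "\<delta> > 0" "polyhedral_set C"
    "\<And>x. x \<in> ball y \<delta> \<Longrightarrow> x \<in> K \<longleftrightarrow> x \<in> C"
    "\<And>x. x \<in> ball y \<delta> \<Longrightarrow> x \<in> K \<longleftrightarrow> x - y \<in> tcone K y"
proof -
  obtain W C where W: "y \<in> K" "open W" "y \<in> W" "polyhedral_set C" "K \<inter> W = C \<inter> W"
    using assms(2) unfolding locally_polyhedral_def by (elim exE conjE) (rule that)
  obtain \<delta>\<^sub>1 where "\<delta>\<^sub>1 > 0" "ball y \<delta>\<^sub>1 \<subseteq> W"
    using W(2,3) open_contains_ball by blast
  obtain b where "b > 0" and b: "\<And>\<delta>. 0 < \<delta> \<Longrightarrow> \<delta> < b \<Longrightarrow> ray_closed_in_ball C y \<delta>"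
    using eventually_ray_closed_in_ball_polyhedral[OF W(4)] unfolding eventually_at_right_field by auto
  define \<delta> where "\<delta> = min b \<delta>\<^sub>1 / 2"
  have "\<delta> > 0" "\<delta> < b" "\<delta> \<le> \<delta>\<^sub>1"
    using \<open>b > 0\<close> \<open>\<delta>\<^sub>1 > 0\<close> by (auto simp: \<delta>_def)
  have agree: "x \<in> K \<longleftrightarrow> x \<in> C" if "x \<in> ball y \<delta>" for x
  proof -
    have "x \<in> W"
      using that subset_ball[OF \<open>\<delta> \<le> \<delta>\<^sub>1\<close>] \<open>ball y \<delta>\<^sub>1 \<subseteq> W\<close> by blast
    moreover have "x \<in> K \<inter> W \<longleftrightarrow> x \<in> C \<inter> W"
      by (simp only: W(5))
    ultimately show ?thesis
      by simp
  qed
  have "ray_closed_in_ball K y \<delta>"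
    using ray_closed_in_ball_cong[OF agree] b[OF \<open>\<delta> > 0\<close> \<open>\<delta> < b\<close>] by simp
  then have "x \<in> K \<longleftrightarrow> x - y \<in> tcone K y" if "x \<in> ball y \<delta>" for x
    using ray_closed_in_ball_tcone[OF assms(1) W(1) _ that] by blast
  from \<open>\<delta> > 0\<close> W(4) agree this show ?thesis
    by (rule that)
qed

lemma locally_polyhedral_tcone:
  assumes "closed K" "locally_polyhedral K y" "q \<in> tcone K y"
  shows "locally_polyhedral (tcone K y) q"
proof -
  obtain \<delta> C where "\<delta> > 0" "polyhedral_set C"
    and C: "\<And>x. x \<in> ball y \<delta> \<Longrightarrow> x \<in> K \<longleftrightarrow> x \<in> C"
    and T: "\<And>x. x \<in> ball y \<delta> \<Longrightarrow> x \<in> K \<longleftrightarrow> x - y \<in> tcone K y"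
    by (rule locally_polyhedral_local_cone[OF assms(1,2)]) (rule that)
  define \<epsilon> where "\<epsilon> = \<delta> / (2 * (norm q + 1))"
  define V where "V = ball (0::'a) (2 * (norm q + 1))"
  have "\<epsilon> > 0"
    using \<open>\<delta> > 0\<close> by (simp add: \<epsilon>_def add_nonneg_pos)
  have "q \<in> V"
    by (simp add: V_def add_nonneg_pos)
  have "x \<in> tcone K y \<longleftrightarrow> x \<in> {x. y + \<epsilon> *\<^sub>R x \<in> C}" if "x \<in> V" for x
  proof -
    have "norm q + 1 > 0"
      by (simp add: add_nonneg_pos)
    have "\<epsilon> * norm x < \<epsilon> * (2 * (norm q + 1))"
      using that \<open>\<epsilon> > 0\<close> by (intro mult_strict_left_mono) (simp_all add: V_def)
    also have "\<dots> = \<delta>"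
      using \<open>norm q + 1 > 0\<close> by (simp add: \<epsilon>_def)
    finally have "\<epsilon> * norm x < \<delta>" .
    then have near: "y + \<epsilon> *\<^sub>R x \<in> ball y \<delta>"
      using \<open>\<epsilon> > 0\<close> by (simp add: dist_norm)
    have "x \<in> tcone K y \<longleftrightarrow> \<epsilon> *\<^sub>R x \<in> tcone K y"
      by (rule cone_scaleR_iff[OF cone_tcone \<open>\<epsilon> > 0\<close>, symmetric])
    also have "\<dots> \<longleftrightarrow> y + \<epsilon> *\<^sub>R x \<in> K"
      using T[OF near] by simp
    also have "\<dots> \<longleftrightarrow> y + \<epsilon> *\<^sub>R x \<in> C"
      using C[OF near] .
    finally show ?thesis
      by simp
  qed
  then have "tcone K y \<inter> V = {x. y + \<epsilon> *\<^sub>R x \<in> C} \<inter> V"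
    by blast
  moreover have "polyhedral_set {x. y + \<epsilon> *\<^sub>R x \<in> C}"
    using \<open>polyhedral_set C\<close> \<open>\<epsilon> > 0\<close> by (simp add: polyhedral_set_affine_vimage)
  moreover have "open V"
    by (simp add: V_def)
  ultimately show ?thesis
    unfolding locally_polyhedral_def using assms(3) \<open>q \<in> V\<close>
    by (intro conjI exI[of _ V] exI[of _ "{x. y + \<epsilon> *\<^sub>R x \<in> C}"]) assumption+
qed

lemma tcone_tcone_locally_polyhedral:
  assumes "closed K" "locally_polyhedral K y" "w \<in> tcone K y"
  shows "\<exists>x\<in>K. tcone K x = tcone (tcone K y) w"
proof -
  obtain \<delta> C where "\<delta> > 0" "polyhedral_set C" "\<And>x. x \<in> ball y \<delta> \<Longrightarrow> x \<in> K \<longleftrightarrow> x \<in> C"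
    and T: "\<And>x. x \<in> ball y \<delta> \<Longrightarrow> x \<in> K \<longleftrightarrow> x - y \<in> tcone K y"
    by (rule locally_polyhedral_local_cone[OF assms(1,2)]) (rule that)
  define \<epsilon> where "\<epsilon> = \<delta> / (2 * (norm w + 1))"
  have "\<epsilon> > 0"
    using \<open>\<delta> > 0\<close> by (simp add: \<epsilon>_def add_nonneg_pos)
  have "norm w + 1 > 0"
    by (simp add: add_nonneg_pos)
  then have "\<epsilon> * norm w = \<delta> / 2 * (norm w / (norm w + 1))"
    by (simp add: \<epsilon>_def)
  also have "\<dots> < \<delta> / 2 * 1"
    using \<open>\<delta> > 0\<close> \<open>norm w + 1 > 0\<close> by (intro mult_strict_left_mono) simp_all
  finally have "\<epsilon> * norm w < \<delta> / 2"
    by simp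
  define x where "x = y + \<epsilon> *\<^sub>R w"
  have near: "x' \<in> ball y \<delta>" if "x' \<in> ball x (\<delta> / 2)" for x'
  proof -
    have "dist y x' \<le> dist y x + dist x x'"
      by (rule dist_triangle)
    also have "\<dots> < \<delta>"
      using that \<open>\<epsilon> > 0\<close> \<open>\<epsilon> * norm w < \<delta> / 2\<close> by (simp add: x_def dist_norm)
    finally show ?thesis
      by simp
  qed
  have "\<epsilon> *\<^sub>R w \<in> tcone K y"
    using assms(3) \<open>\<epsilon> > 0\<close> cone_scaleR_iff[OF cone_tcone] by blast
  then have "x \<in> K"
    using T[OF near[of x]] \<open>\<delta> > 0\<close> by (simp add: x_def)
  have "tcone K x = tcone {x'. x' - y \<in> tcone K y} x"
    using \<open>\<delta> > 0\<close> T near by (intro tcone_cong_ball[of "\<delta> / 2"]) auto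
  also have "\<dots> = tcone (tcone K y) (\<epsilon> *\<^sub>R w)"
    unfolding x_def by (rule tcone_translate)
  also have "\<dots> = tcone (tcone K y) w"
    using \<open>\<epsilon> > 0\<close> by (rule tcone_scaleR_base[OF cone_tcone])
  finally show ?thesis
    using \<open>x \<in> K\<close> by blast
qed

section \<open>Exact penalties for the linearised problem\<close>

text \<open>c is an exact penalty parameter for minimising g \<bullet> u subject to A u \<in> K, with the
  origin as minimiser.\<close>

definition exact_penalty :: "('a::real_inner \<Rightarrow> 'b::real_normed_vector) \<Rightarrow> 'a \<Rightarrow> real \<Rightarrow> 'b set \<Rightarrow> bool"
  where "exact_penalty A g c K \<longleftrightarrow> (\<forall>u. \<forall>y\<in>K. 0 \<le> g \<bullet> u + c * dist (A u) y)"

lemma exact_penalty_tcone: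
  assumes A: "linear A" and pen: "exact_penalty A g c K" and u: "g \<bullet> u = 0"
  shows "exact_penalty A g c (tcone K (A u))"
  unfolding exact_penalty_def
proof (intro allI ballI)
  fix v y assume "y \<in> tcone K (A u)"
  then obtain t zs where t: "\<forall>k. t k > 0" "zs \<longlonglongrightarrow> y" "\<forall>k. A u + t k *\<^sub>R zs k \<in> K"
    by (elim tconeE)
  have "0 \<le> g \<bullet> v + c * dist (A v) (zs k)" for k
  proof -
    have "t k > 0"
      using t(1) by simp
    have "0 \<le> g \<bullet> (u + t k *\<^sub>R v) + c * dist (A (u + t k *\<^sub>R v)) (A u + t k *\<^sub>R zs k)"
      using pen t(3) unfolding exact_penalty_def by blast
    also have "\<dots> = t k * (g \<bullet> v + c * dist (A v) (zs k))"
      using A u \<open>t k > 0\<close> by (simp add: linear_add linear_scale inner_add_right dist_norm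
          algebra_simps flip: scaleR_diff_right)
    finally show ?thesis
      using \<open>t k > 0\<close> by (simp add: zero_le_mult_iff)
  qed
  moreover have "(\<lambda>k. g \<bullet> v + c * dist (A v) (zs k)) \<longlonglongrightarrow> g \<bullet> v + c * dist (A v) y"
    using t(2) by (intro tendsto_intros)
  ultimately show "0 \<le> g \<bullet> v + c * dist (A v) y"
    by (simp add: LIMSEQ_le_const)
qed

lemma nearest_point_in_rnormal:
  fixes x y :: "'a::euclidean_space"
  assumes "y \<in> K" and nearest: "\<And>y'. y' \<in> K \<Longrightarrow> dist x y \<le> dist x y'"
  shows "x - y \<in> rnormal K y"
proof -
  have "(x - y) \<bullet> d \<le> 0" if "d \<in> tcone K y" for d
  proof -
    obtain t ds where t: "\<forall>k. t k > 0" "t \<longlonglongrightarrow> 0" "ds \<longlonglongrightarrow> d" "\<forall>k. y + t k *\<^sub>R ds k \<in> K"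
      using \<open>d \<in> tcone K y\<close> by (elim tconeE)
    have "2 * ((x - y) \<bullet> ds k) \<le> t k * (ds k \<bullet> ds k)" for k
    proof -
      have "(norm (x - y))\<^sup>2 \<le> (norm ((x - y) - t k *\<^sub>R ds k))\<^sup>2"
        using nearest[OF t(4)[rule_format, of k]] by (simp add: dist_norm diff_diff_eq)
      then have "t k * (2 * ((x - y) \<bullet> ds k)) \<le> t k * (t k * (ds k \<bullet> ds k))"
        by (simp add: power2_norm_eq_inner inner_diff_left inner_diff_right inner_commute
            algebra_simps)
      then show ?thesis
        using t(1) by (simp add: mult_le_cancel_left_pos)
    qed
    moreover have "(\<lambda>k. 2 * ((x - y) \<bullet> ds k)) \<longlonglongrightarrow> 2 * ((x - y) \<bullet> d)"
      by (intro tendsto_intros t(3))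
    moreover have "(\<lambda>k. t k * (ds k \<bullet> ds k)) \<longlonglongrightarrow> 0 * (d \<bullet> d)"
      by (intro tendsto_intros t(2,3))
    ultimately have "2 * ((x - y) \<bullet> d) \<le> 0 * (d \<bullet> d)"
      using LIMSEQ_le by blast
    then show ?thesis
      by simp
  qed
  then show ?thesis
    using \<open>y \<in> K\<close> by (simp add: rnormal_def polar_def)
qed

lemma rnormal_scaleR: "ws \<in> rnormal K y \<Longrightarrow> c \<ge> 0 \<Longrightarrow> c *\<^sub>R ws \<in> rnormal K y"
  by (auto simp: rnormal_def polar_def split: if_splits intro: mult_nonneg_nonpos)

lemma exact_penalty_multiplier:
  fixes A :: "'a::euclidean_space \<Rightarrow> 'b::euclidean_space"
  assumes A: "linear A" and pen: "exact_penalty A g c K" and "c > 0"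
    and "y \<in> K" "A u \<noteq> y" and zero: "g \<bullet> u + c * dist (A u) y = 0"
  shows "\<exists>ws\<in>rnormal K y. g + adjoint A ws = 0"
proof -
  define a where "a = A u - y"
  have "a \<noteq> 0"
    using \<open>A u \<noteq> y\<close> by (simp add: a_def)
  define ws where "ws = (c / norm a) *\<^sub>R a"
  \<comment> \<open>y is a point of K nearest to A u, since the penalty is minimal there\<close>
  have "dist (A u) y \<le> dist (A u) y'" if "y' \<in> K" for y'
    using pen that zero \<open>c > 0\<close> unfolding exact_penalty_def
    by (metis add_le_cancel_left mult_le_cancel_left_pos)
  then have "ws \<in> rnormal K y"
    unfolding ws_def a_def using \<open>y \<in> K\<close> \<open>c > 0\<close>
    by (intro rnormal_scaleR nearest_point_in_rnormal) auto
  \<comment> \<open>and u minimises the penalty, which is differentiable at u since its norm term does not vanish\<close>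
  have "((\<lambda>v. A v - y) has_derivative A) (at u)"
    using A by (auto intro!: derivative_eq_intros bounded_linear_imp_has_derivative
        simp: linear_conv_bounded_linear)
  from has_derivative_compose[OF this has_derivative_norm[of "A u - y"]]
  have "((\<lambda>v. g \<bullet> v + c * norm (A v - y)) has_derivative (\<lambda>h. g \<bullet> h + c * (A h \<bullet> sgn a))) (at u)"
    using \<open>a \<noteq> 0\<close> unfolding a_def by (auto intro!: derivative_eq_intros)
  moreover have "\<forall>\<^sub>F v in at u. g \<bullet> u + c * norm (A u - y) \<le> g \<bullet> v + c * norm (A v - y)"
    using pen zero \<open>y \<in> K\<close> by (auto simp: exact_penalty_def dist_norm intro!: always_eventually)
  ultimately have "(\<lambda>h. g \<bullet> h + c * (A h \<bullet> sgn a)) = (\<lambda>h. 0)"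
    by (rule has_derivative_local_min)
  then have stationary: "g \<bullet> h + c * (A h \<bullet> sgn a) = 0" for h
    by (rule fun_cong)
  have "(g + adjoint A ws) \<bullet> h = 0" for h
  proof -
    have "(g + adjoint A ws) \<bullet> h = g \<bullet> h + A h \<bullet> ws"
      using adjoint_works[OF A, of h ws] by (simp add: inner_add_left inner_add_right inner_commute[of _ h])
    also have "\<dots> = g \<bullet> h + c * (A h \<bullet> sgn a)"
      by (simp add: ws_def sgn_div_norm field_simps)
    finally show ?thesis
      using stationary[of h] by simp
  qed
  from this[of "g + adjoint A ws"] \<open>ws \<in> rnormal K y\<close> show ?thesis
    by auto
qed

lemma exact_penalty_pos:
  assumes "exact_penalty A g c K" "g \<noteq> 0" "K \<noteq> {}"
  shows "c > 0"
proof (rule ccontr)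
  assume "\<not> c > 0"
  obtain y where "y \<in> K"
    using assms(3) by blast
  then have "0 \<le> g \<bullet> (- g) + c * dist (A (- g)) y"
    using assms(1) unfolding exact_penalty_def by blast
  moreover have "c * dist (A (- g)) y \<le> 0"
    using \<open>\<not> c > 0\<close> by (simp add: mult_nonpos_nonneg)
  moreover have "g \<bullet> g > 0"
    using assms(2) by simp
  ultimately show False
    by (simp add: inner_minus_right)
qed

lemma least_exact_penalty:
  assumes "exact_penalty A g c K" "c \<ge> 0"
  obtains c\<^sub>0 where "c\<^sub>0 \<ge> 0" "exact_penalty A g c\<^sub>0 K"
    "\<And>c'. 0 \<le> c' \<Longrightarrow> c' < c\<^sub>0 \<Longrightarrow> \<not> exact_penalty A g c' K"
proof -
  define P where "P = {c. 0 \<le> c \<and> exact_penalty A g c K}"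
  have "P = {c. 0 \<le> c} \<inter> (\<Inter>u. \<Inter>y\<in>K. {c. 0 \<le> g \<bullet> u + c * dist (A u) y})"
    by (auto simp: P_def exact_penalty_def)
  then have "closed P"
    by (auto intro!: closed_Int closed_INT closed_Collect_le continuous_intros)
  moreover have "c \<in> P" "bdd_below P"
    using assms by (auto simp: P_def bdd_below_def)
  ultimately have "Inf P \<in> P"
    by (intro closed_contains_Inf) auto
  moreover have "\<not> exact_penalty A g c' K" if "0 \<le> c'" "c' < Inf P" for c'
    using cInf_lower[OF _ \<open>bdd_below P\<close>, of c'] that by (auto simp: P_def)
  ultimately show ?thesis
    using that by (auto simp: P_def)
qed

text \<open>Translating (u, y) along this subspace leaves the penalty unchanged; its elements are the
  trivial zeros of the penalty.\<close>

definition penalty_lineality :: "('a::real_inner \<Rightarrow> 'b::real_vector) \<Rightarrow> 'a \<Rightarrow> 'b set \<Rightarrow> ('a \<times> 'b) set"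
  where "penalty_lineality A g K = (\<lambda>m. (m, A m)) ` {m. A m \<in> lineality K \<and> g \<bullet> m = 0}"

lemma subspace_penalty_lineality:
  assumes A: "linear A" and K: "cone K"
  shows "subspace (penalty_lineality A g K)"
proof -
  have "subspace {m. A m \<in> lineality K \<and> g \<bullet> m = 0}"
    using subspace_lineality[OF K] A
    by (simp add: subspace_def linear_add linear_scale linear_0 inner_add_right)
  moreover have "linear (\<lambda>m. (m, A m))"
    using A by (intro linearI) (simp_all add: linear_add linear_scale)
  ultimately show ?thesis
    unfolding penalty_lineality_def by (rule linear_subspace_image[rotated])
qed

lemma penalty_translate_scale:
  fixes A :: "'a::real_inner \<Rightarrow> 'b::real_normed_vector"
  assumes A: "linear A" and K: "cone K" "y \<in> K" and m: "A m \<in> lineality K" "g \<bullet> m = 0"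
    and "s > 0"
  shows "s *\<^sub>R (y - A m) \<in> K"
    and "g \<bullet> (s *\<^sub>R (u - m)) + c * dist (A (s *\<^sub>R (u - m))) (s *\<^sub>R (y - A m)) =
      s * (g \<bullet> u + c * dist (A u) y)"
proof -
  have "y - A m \<in> K"
    using K(2) m(1) by (simp add: lineality_def)
  then show "s *\<^sub>R (y - A m) \<in> K"
    using K(1) \<open>s > 0\<close> by (simp add: cone_scaleR_iff)
  have "A (s *\<^sub>R (u - m)) - s *\<^sub>R (y - A m) = s *\<^sub>R ((A u - A m) - (y - A m))"
    using A by (simp add: linear_scale linear_diff scaleR_diff_right)
  also have "(A u - A m) - (y - A m) = A u - y"
    by simp
  finally have "dist (A (s *\<^sub>R (u - m))) (s *\<^sub>R (y - A m)) = norm (s *\<^sub>R (A u - y))"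
    by (simp only: dist_norm)
  then have "dist (A (s *\<^sub>R (u - m))) (s *\<^sub>R (y - A m)) = s * dist (A u) y"
    using \<open>s > 0\<close> by (simp add: dist_norm)
  moreover have "g \<bullet> (s *\<^sub>R (u - m)) = s * (g \<bullet> u)"
    using m(2) by (simp add: inner_diff_right)
  ultimately show "g \<bullet> (s *\<^sub>R (u - m)) + c * dist (A (s *\<^sub>R (u - m))) (s *\<^sub>R (y - A m)) =
      s * (g \<bullet> u + c * dist (A u) y)"
    by (simp add: algebra_simps)
qed

lemma exact_penalty_violation_normalized:
  fixes A :: "'a::euclidean_space \<Rightarrow> 'b::euclidean_space"
  assumes A: "linear A" and K: "cone K" and "y \<in> K" and violation: "g \<bullet> u + c * dist (A u) y < 0"
  obtains p where "snd p \<in> K" "g \<bullet> fst p + c * dist (A (fst p)) (snd p) < 0" "norm p = 1"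
    "\<forall>z\<in>penalty_lineality A g K. 1 \<le> dist p z"
proof -
  define N where "N = penalty_lineality A g K"
  have "subspace N"
    unfolding N_def using A K by (rule subspace_penalty_lineality)
  then have "closed N" "N \<noteq> {}"
    using closed_subspace subspace_0 by blast+
  define p\<^sub>0 where "p\<^sub>0 = (u, y)"
  have "p\<^sub>0 \<notin> N"
  proof
    assume "p\<^sub>0 \<in> N"
    then have "y = A u" "g \<bullet> u = 0"
      unfolding N_def penalty_lineality_def p\<^sub>0_def by blast+
    with violation show False
      by simp
  qed
  define d where "d = infdist p\<^sub>0 N"
  have "d > 0"
    unfolding d_def using \<open>closed N\<close> \<open>N \<noteq> {}\<close> \<open>p\<^sub>0 \<notin> N\<close> by (rule infdist_pos_not_in_closed)
  obtain q where "q \<in> N" "d = dist p\<^sub>0 q"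
    unfolding d_def using \<open>closed N\<close> \<open>N \<noteq> {}\<close> by (rule infdist_attains_inf)
  then obtain m where q: "q = (m, A m)" "A m \<in> lineality K" "g \<bullet> m = 0"
    unfolding N_def penalty_lineality_def by blast
  have "inverse d > 0"
    using \<open>d > 0\<close> by simp
  define p where "p = inverse d *\<^sub>R (p\<^sub>0 - q)"
  have p: "p = (inverse d *\<^sub>R (u - m), inverse d *\<^sub>R (y - A m))"
    by (simp add: p_def p\<^sub>0_def q)
  show ?thesis
  proof
    show "snd p \<in> K" "g \<bullet> fst p + c * dist (A (fst p)) (snd p) < 0"
      using penalty_translate_scale[OF A K \<open>y \<in> K\<close> q(2,3) \<open>inverse d > 0\<close>] violation \<open>d > 0\<close>
      by (simp_all add: p mult_pos_neg)
    show "norm p = 1"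
      using \<open>d > 0\<close> \<open>d = dist p\<^sub>0 q\<close> by (simp add: p_def dist_norm)
    show "\<forall>z\<in>penalty_lineality A g K. 1 \<le> dist p z"
      unfolding N_def[symmetric]
    proof
      fix z assume "z \<in> N"
      then have "q + d *\<^sub>R z \<in> N"
        using \<open>subspace N\<close> \<open>q \<in> N\<close> by (simp add: subspace_add subspace_scale)
      then have "d \<le> dist p\<^sub>0 (q + d *\<^sub>R z)"
        unfolding d_def by (rule infdist_le)
      also have "p\<^sub>0 - (q + d *\<^sub>R z) = d *\<^sub>R (p - z)"
        using \<open>d > 0\<close> by (simp add: p_def scaleR_diff_right)
      then have "dist p\<^sub>0 (q + d *\<^sub>R z) = d * dist p z"
        using \<open>d > 0\<close> by (simp add: dist_norm)
      finally show "1 \<le> dist p z"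
        using \<open>d > 0\<close> by simp
    qed
  qed
qed

lemma exact_penalty_violations_below:
  fixes A :: "'a::euclidean_space \<Rightarrow> 'b::euclidean_space"
  assumes A: "linear A" and K: "cone K" and "c > 0"
    and least: "\<And>c'. 0 \<le> c' \<Longrightarrow> c' < c \<Longrightarrow> \<not> exact_penalty A g c' K"
  obtains c' p where "c' \<longlonglongrightarrow> c" "\<And>n. snd (p n) \<in> K"
    "\<And>n. g \<bullet> fst (p n) + c' n * dist (A (fst (p n))) (snd (p n)) < 0"
    "\<And>n. norm (p n) = 1" "\<And>n. \<forall>z\<in>penalty_lineality A g K. 1 \<le> dist (p n) z"
proof -
  define c' where "c' n = c * (1 - inverse (Suc n))" for n :: nat
  have "0 < inverse (real (Suc n))" "inverse (real (Suc n)) \<le> 1" for n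
    by (simp_all add: inverse_le_1_iff)
  then have "0 \<le> c' n" "c' n < c" for n
    using \<open>c > 0\<close> by (simp_all add: c'_def algebra_simps)
  have "c' \<longlonglongrightarrow> c * (1 - 0)"
    unfolding c'_def by (intro tendsto_intros LIMSEQ_inverse_real_of_nat)
  have "\<exists>p. snd p \<in> K \<and> g \<bullet> fst p + c' n * dist (A (fst p)) (snd p) < 0 \<and> norm p = 1 \<and>
      (\<forall>z\<in>penalty_lineality A g K. 1 \<le> dist p z)" for n
  proof -
    obtain u y where "y \<in> K" "g \<bullet> u + c' n * dist (A u) y < 0"
      using least[OF \<open>0 \<le> c' n\<close> \<open>c' n < c\<close>] by (auto simp: exact_penalty_def not_le)
    then obtain q where "snd q \<in> K" "g \<bullet> fst q + c' n * dist (A (fst q)) (snd q) < 0" "norm q = 1"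
      "\<forall>z\<in>penalty_lineality A g K. 1 \<le> dist q z"
      by (rule exact_penalty_violation_normalized[OF A K]) (rule that)
    then show ?thesis
      by blast
  qed
  then obtain p where p: "\<And>n. snd (p n) \<in> K"
    "\<And>n. g \<bullet> fst (p n) + c' n * dist (A (fst (p n))) (snd (p n)) < 0"
    "\<And>n. norm (p n) = 1" "\<And>n. \<forall>z\<in>penalty_lineality A g K. 1 \<le> dist (p n) z"
    by metis
  from \<open>c' \<longlonglongrightarrow> c * (1 - 0)\<close> have "c' \<longlonglongrightarrow> c"
    by simp
  from this p show ?thesis
    by (rule that)
qed

lemma exact_penalty_critical_point:
  fixes A :: "'a::euclidean_space \<Rightarrow> 'b::euclidean_space"
  assumes A: "linear A" and K: "closed K" "cone K" and "c > 0" and pen: "exact_penalty A g c K"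
    and least: "\<And>c'. 0 \<le> c' \<Longrightarrow> c' < c \<Longrightarrow> \<not> exact_penalty A g c' K"
  obtains l where "snd l \<in> K" "g \<bullet> fst l + c * dist (A (fst l)) (snd l) = 0"
    "\<forall>z\<in>penalty_lineality A g K. 1 \<le> dist l z"
proof -
  obtain c' p where "c' \<longlonglongrightarrow> c" and p: "\<And>n. snd (p n) \<in> K"
    "\<And>n. g \<bullet> fst (p n) + c' n * dist (A (fst (p n))) (snd (p n)) < 0"
    "\<And>n. norm (p n) = 1" "\<And>n. \<forall>z\<in>penalty_lineality A g K. 1 \<le> dist (p n) z"
    using exact_penalty_violations_below[OF A K(2) \<open>c > 0\<close> least] by blast
  have "bounded (range p)"
    using p(3) by (auto simp: bounded_iff)
  then obtain l r where "strict_mono r" and lim: "(p \<circ> r) \<longlonglongrightarrow> l"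
    using bounded_imp_convergent_subsequence by blast
  have fst_lim: "(\<lambda>n. fst (p (r n))) \<longlonglongrightarrow> fst l" and snd_lim: "(\<lambda>n. snd (p (r n))) \<longlonglongrightarrow> snd l"
    using tendsto_fst[OF lim] tendsto_snd[OF lim] by (simp_all add: o_def)
  have "snd l \<in> K"
    by (rule closed_sequentially[OF K(1) _ snd_lim]) (simp add: p(1))
  have far: "\<forall>z\<in>penalty_lineality A g K. 1 \<le> dist l z"
    using p(4) by (auto intro: LIMSEQ_le_const[OF tendsto_dist[OF lim tendsto_const]])
  have A_lim: "(\<lambda>n. A (fst (p (r n)))) \<longlonglongrightarrow> A (fst l)"
    using A fst_lim by (simp add: linear_conv_bounded_linear bounded_linear.tendsto[of A])
  have c'_lim: "(\<lambda>n. c' (r n)) \<longlonglongrightarrow> c"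
    using LIMSEQ_subseq_LIMSEQ[OF \<open>c' \<longlonglongrightarrow> c\<close> \<open>strict_mono r\<close>] by (simp add: o_def)
  have "(\<lambda>n. g \<bullet> fst (p (r n)) + c' (r n) * dist (A (fst (p (r n)))) (snd (p (r n))))
      \<longlonglongrightarrow> g \<bullet> fst l + c * dist (A (fst l)) (snd l)"
    by (intro tendsto_intros fst_lim snd_lim A_lim c'_lim)
  then have "g \<bullet> fst l + c * dist (A (fst l)) (snd l) \<le> 0"
    using p(2) by (intro LIMSEQ_le_const2) (auto intro: less_imp_le)
  moreover have "0 \<le> g \<bullet> fst l + c * dist (A (fst l)) (snd l)"
    using pen \<open>snd l \<in> K\<close> by (simp add: exact_penalty_def)
  ultimately show ?thesis
    using that \<open>snd l \<in> K\<close> far by auto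
qed

lemma exact_penalty_dichotomy:
  fixes A :: "'a::euclidean_space \<Rightarrow> 'b::euclidean_space"
  assumes A: "linear A" and K: "closed K" "cone K" "K \<noteq> {}" and pen: "exact_penalty A g c K"
  shows "(\<exists>w ws. w \<in> K \<and> ws \<in> rnormal K w \<and> g + adjoint A ws = 0) \<or>
    (\<exists>u. A u \<in> K \<and> g \<bullet> u = 0 \<and> A u \<notin> lineality K)"
proof (cases "g = 0")
  case True
  have "0 \<in> K"
    using K(2,3) cone_contains_0 by blast
  moreover have "0 \<in> rnormal K 0"
    using \<open>0 \<in> K\<close> by (simp add: rnormal_def polar_def)
  moreover have "g + adjoint A 0 = 0"
    using True linear_0[OF adjoint_linear[OF A]] by simp
  ultimately show ?thesis
    by blast
next
  case False
  then have "c > 0"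
    using exact_penalty_pos[OF pen _ K(3)] by blast
  then obtain c\<^sub>0 where "c\<^sub>0 \<ge> 0" "exact_penalty A g c\<^sub>0 K"
    and least: "\<And>c'. 0 \<le> c' \<Longrightarrow> c' < c\<^sub>0 \<Longrightarrow> \<not> exact_penalty A g c' K"
    using least_exact_penalty[OF pen less_imp_le] by blast
  have "c\<^sub>0 > 0"
    using \<open>exact_penalty A g c\<^sub>0 K\<close> False K(3) by (rule exact_penalty_pos)
  obtain l where "snd l \<in> K" and zero: "g \<bullet> fst l + c\<^sub>0 * dist (A (fst l)) (snd l) = 0"
    and far: "\<forall>z\<in>penalty_lineality A g K. 1 \<le> dist l z"
    using exact_penalty_critical_point[OF A K(1,2) \<open>c\<^sub>0 > 0\<close> \<open>exact_penalty A g c\<^sub>0 K\<close> least] by blast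
  show ?thesis
  proof (cases "A (fst l) = snd l")
    case True
    with zero have "g \<bullet> fst l = 0"
      by simp
    have "A (fst l) \<notin> lineality K"
    proof
      assume "A (fst l) \<in> lineality K"
      with True \<open>g \<bullet> fst l = 0\<close> have "l \<in> penalty_lineality A g K"
        unfolding penalty_lineality_def by (intro image_eqI[of _ _ "fst l"]) (auto simp: prod_eq_iff)
      with far show False
        by fastforce
    qed
    with True \<open>snd l \<in> K\<close> \<open>g \<bullet> fst l = 0\<close> show ?thesis
      by (intro disjI2 exI[of _ "fst l"]) simp
  next
    case False
    then show ?thesis
      using exact_penalty_multiplier[OF A \<open>exact_penalty A g c\<^sub>0 K\<close> \<open>c\<^sub>0 > 0\<close> \<open>snd l \<in> K\<close> _ zero]
        \<open>snd l \<in> K\<close>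
      by blast
  qed
qed

lemma exact_penalty_if_local:
  fixes A :: "'a::real_inner \<Rightarrow> 'b::real_normed_vector"
  assumes A: "linear A" and K: "cone K" and "r > 0"
    and local: "\<And>u y. norm u < r \<Longrightarrow> y \<in> K \<Longrightarrow> 0 \<le> g \<bullet> u + c * dist (A u) y"
  shows "exact_penalty A g c K"
  unfolding exact_penalty_def
proof (intro allI ballI)
  fix u :: 'a and y assume "y \<in> K"
  define s where "s = r / (norm u + 1)"
  have "s > 0"
    using \<open>r > 0\<close> by (simp add: s_def add_nonneg_pos)
  have "norm (s *\<^sub>R u) = r * (norm u / (norm u + 1))"
    using \<open>r > 0\<close> by (simp add: s_def)
  also have "\<dots> < r * 1"
    using \<open>r > 0\<close> by (intro mult_strict_left_mono) (simp_all add: add_nonneg_pos)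
  finally have "0 \<le> g \<bullet> (s *\<^sub>R u) + c * dist (A (s *\<^sub>R u)) (s *\<^sub>R y)"
    using \<open>y \<in> K\<close> K \<open>s > 0\<close> by (intro local) (simp_all add: cone_scaleR_iff)
  also have "\<dots> = s * (g \<bullet> u + c * dist (A u) y)"
    using A \<open>s > 0\<close> by (simp add: linear_scale dist_norm algebra_simps flip: scaleR_diff_right)
  finally show "0 \<le> g \<bullet> u + c * dist (A u) y"
    using \<open>s > 0\<close> by (simp add: zero_le_mult_iff)
qed

lemma exact_penalty_if_subregular:
  fixes A :: "'a::euclidean_space \<Rightarrow> 'b::euclidean_space"
  assumes A: "linear A" and K: "closed K" "cone K"
    and nonneg: "\<And>u. A u \<in> K \<Longrightarrow> 0 \<le> g \<bullet> u"
    and subreg: "metrically_subregular (\<lambda>u. {A u - t | t. t \<in> K}) 0 0"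
  shows "\<exists>c. exact_penalty A g c K"
proof -
  obtain W \<kappa> where "open W" "0 \<in> W" "\<kappa> > 0"
    and bound: "\<And>x. x \<in> W \<Longrightarrow> {A x - t | t. t \<in> K} \<noteq> {} \<Longrightarrow>
      infdist x {u. 0 \<in> {A u - t | t. t \<in> K}} \<le> \<kappa> * infdist 0 {A x - t | t. t \<in> K}"
    using subreg unfolding metrically_subregular_def by blast
  define U where "U = A -` K"
  have U: "{u. 0 \<in> {A u - t | t. t \<in> K}} = U"
    by (auto simp: U_def)
  have "closed U"
    unfolding U_def using A K(1) by (intro continuous_closed_vimage linear_continuous_at)
      (simp_all add: linear_conv_bounded_linear)
  have "0 \<in> K"
    using subreg A by (simp add: metrically_subregular_def linear_0)
  then have "0 \<in> U"
    using A by (simp add: U_def linear_0)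
  obtain r where "r > 0" "ball 0 r \<subseteq> W"
    using \<open>open W\<close> \<open>0 \<in> W\<close> open_contains_ball by blast
  \<comment> \<open>subregularity bounds the distance to the linearised feasible set, on which g is nonnegative\<close>
  have "0 \<le> g \<bullet> x + (\<kappa> * norm g) * dist (A x) y" if "norm x < r" "y \<in> K" for x y
  proof -
    obtain p where "p \<in> U" "infdist x U = dist x p"
      using \<open>closed U\<close> \<open>0 \<in> U\<close> infdist_attains_inf by blast
    have "x \<in> W"
      using that(1) \<open>ball 0 r \<subseteq> W\<close> by (metis dist_0_norm mem_ball subsetD)
    then have "infdist x U \<le> \<kappa> * infdist 0 {A x - t | t. t \<in> K}"
      using bound that(2) U by blast
    also have "infdist 0 {A x - t | t. t \<in> K} \<le> dist (A x) y"
      using infdist_le[of "A x - y" "{A x - t | t. t \<in> K}" 0] that(2)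
      by (auto simp: dist_norm norm_minus_commute)
    finally have "dist x p \<le> \<kappa> * dist (A x) y"
      using \<open>\<kappa> > 0\<close> \<open>infdist x U = dist x p\<close> by (simp add: mult_left_mono)
    moreover have "g \<bullet> p - g \<bullet> x \<le> norm g * dist x p"
      using norm_cauchy_schwarz[of g "p - x"]
      by (simp add: inner_diff_right dist_norm norm_minus_commute)
    moreover have "0 \<le> g \<bullet> p"
      using nonneg \<open>p \<in> U\<close> by (simp add: U_def)
    ultimately show ?thesis
      by (smt (verit) mult.assoc mult.commute mult_left_mono norm_ge_zero)
  qed
  then show ?thesis
    using exact_penalty_if_local[OF A K(2) \<open>r > 0\<close>] by blast
qed

section \<open>Chains of critical directions\<close>

fun critical_chain :: "('a::euclidean_space \<Rightarrow> 'b::euclidean_space) \<Rightarrow> 'a \<Rightarrow> 'b set \<Rightarrow> 'a list \<Rightarrow> bool"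
  where
    "critical_chain A g K [] \<longleftrightarrow> True"
  | "critical_chain A g K (u # us) \<longleftrightarrow>
      A u \<in> K \<and> A u \<notin> Lsp K \<and> g \<bullet> u = 0 \<and> \<not> locally_polyhedral K (A u) \<and>
      critical_chain A g (tcone K (A u)) us"

lemma critical_chain_iff:
  "critical_chain A g K us \<longleftrightarrow> (\<forall>l < length us.
     A (us ! l) \<in> foldl tcone K (map A (take l us)) \<and>
     A (us ! l) \<notin> Lsp (foldl tcone K (map A (take l us))) \<and> g \<bullet> us ! l = 0 \<and>
     \<not> locally_polyhedral (foldl tcone K (map A (take l us))) (A (us ! l)))"
  by (induction us arbitrary: K) (simp_all add: All_less_Suc2)

lemma critical_chain_tcone_locally_polyhedral:
  assumes "closed K" "locally_polyhedral K y" "critical_chain A g (tcone K y) us"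
  shows "us = []"
proof (cases us)
  case (Cons v vs)
  with assms locally_polyhedral_tcone show ?thesis
    by auto
qed

lemma exact_penalty_critical_chain:
  fixes A :: "'a::euclidean_space \<Rightarrow> 'b::euclidean_space"
  assumes A: "linear A" and "closed K" "cone K" "K \<noteq> {}" "exact_penalty A g c K"
  shows "\<exists>us w ws. critical_chain A g K us \<and> w \<in> foldl tcone K (map A us) \<and>
    ws \<in> rnormal (foldl tcone K (map A us)) w \<and> g + adjoint A ws = 0"
  using assms(2-)
proof (induction "DIM('b) - dim (lineality K)" arbitrary: K rule: less_induct)
  case less
  note K = less.prems
  from exact_penalty_dichotomy[OF A K] show ?case
  proof (elim disjE exE conjE)
    fix w ws assume "w \<in> K" "ws \<in> rnormal K w" "g + adjoint A ws = 0"
    then show ?case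
      by (intro exI[of _ "[]"]) auto
  next
    fix u assume u: "A u \<in> K" "g \<bullet> u = 0" "A u \<notin> lineality K"
    define K' where "K' = tcone K (A u)"
    have K': "closed K'" "cone K'" "K' \<noteq> {}" "exact_penalty A g c K'"
      using u(1) K(4) exact_penalty_tcone[OF A K(4) u(2)]
      by (auto simp: K'_def closed_tcone cone_tcone dest: zero_in_tcone)
    have "DIM('b) - dim (lineality K') < DIM('b) - dim (lineality K)"
      using dim_lineality_tcone_less[OF K(2) u(3)] dim_subset_UNIV[of "lineality K'"]
      unfolding K'_def by linarith
    then obtain us w ws where IH: "critical_chain A g K' us" "w \<in> foldl tcone K' (map A us)"
        "ws \<in> rnormal (foldl tcone K' (map A us)) w" "g + adjoint A ws = 0"
      using less.hyps[OF _ K'] by blast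
    show ?case
    proof (cases "locally_polyhedral K (A u)")
      case False
      with u IH show ?thesis
        by (intro exI[of _ "u # us"]) (auto simp: K'_def Lsp_eq_lineality[OF K(2)])
    next
      case True
      then have "us = []"
        using critical_chain_tcone_locally_polyhedral[OF K(1)] IH(1) by (simp add: K'_def)
      then have "w \<in> K'" "ws \<in> rnormal K' w"
        using IH(2,3) by simp_all
      moreover obtain x where "x \<in> K" "tcone K x = tcone K' w"
        using tcone_tcone_locally_polyhedral[OF K(1) True] \<open>w \<in> K'\<close> unfolding K'_def by blast
      ultimately have "ws \<in> rnormal K x"
        by (simp add: rnormal_def)
      with \<open>x \<in> K\<close> IH(4) show ?thesis
        by (intro exI[of _ "[]"]) auto
    qed
  qed
qed

theorem theorem4p2:
  fixes f :: "'a::euclidean_space \<Rightarrow> real" and gf :: "'a \<Rightarrow> 'a"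
    and P :: "'a \<Rightarrow> 'b::euclidean_space" and P' :: "'a \<Rightarrow> 'a \<Rightarrow>\<^sub>L 'b"
    and D :: "'b set" and \<Omega> :: "'a set" and zbar :: 'a
  assumes f_deriv: "\<And>z. (f has_derivative (\<lambda>u. gf z \<bullet> u)) (at z)"
    and f_C1: "continuous_on UNIV gf"
    and P_deriv: "\<And>z. (P has_derivative blinfun_apply (P' z)) (at z)"
    and P_C1: "continuous_on UNIV P'"
    and D_closed: "closed D"
    and Omega_def: "\<Omega> = {z. P z \<in> D}"
    and zbar_in: "zbar \<in> \<Omega>"
    and B_stat: "0 \<in> (\<lambda>n. gf zbar + n) ` rnormal \<Omega> zbar"
    and GGCQ: "rnormal \<Omega> zbar = polar (hlincone P (blinfun_apply (P' zbar)) D zbar [])"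
    and subreg: "metrically_subregular
                   (\<lambda>u. {P' zbar u - t | t. t \<in> tcone D (P zbar)}) 0 0"
  shows "\<exists>us :: 'a list. \<exists>w ws.
           w \<in> htcone D (P zbar) (map (blinfun_apply (P' zbar)) us) \<and>
           ws \<in> rnormal (htcone D (P zbar) (map (blinfun_apply (P' zbar)) us)) w \<and>
           gf zbar + adjoint (blinfun_apply (P' zbar)) ws = 0 \<and>
           (\<forall>l < length us.
              us ! l \<in> hlincone P (blinfun_apply (P' zbar)) D zbar (take l us) \<and>
              P' zbar (us ! l) \<notin>
                Lsp (htcone D (P zbar) (map (blinfun_apply (P' zbar)) (take l us))) \<and>
              gf zbar \<bullet> (us ! l) = 0 \<and>
              \<not> locally_polyhedral
                  (htcone D (P zbar) (map (blinfun_apply (P' zbar)) (take l us)))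
                  (P' zbar (us ! l)))"
proof -
  define A where "A = blinfun_apply (P' zbar)"
  define K where "K = tcone D (P zbar)"
  have A: "linear A"
    unfolding A_def by (rule bounded_linear.linear[OF blinfun.bounded_linear_right])
  have "P zbar \<in> D"
    using zbar_in Omega_def by simp
  then have K: "closed K" "cone K" "K \<noteq> {}"
    by (auto simp: K_def closed_tcone cone_tcone dest: zero_in_tcone)
  have "0 \<le> gf zbar \<bullet> u" if "A u \<in> K" for u
  proof -
    obtain n where "n \<in> polar {u. A u \<in> K}" "gf zbar + n = 0"
      using B_stat GGCQ by (auto simp: hlincone_def htcone_def A_def K_def)
    with that show ?thesis
      by (auto simp: polar_def add_eq_0_iff2 inner_minus_left)
  qed
  then obtain c where "exact_penalty A (gf zbar) c K"
    using exact_penalty_if_subregular[OF A K(1,2)] subreg by (auto simp: A_def K_def)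
  then obtain us w ws where "critical_chain A (gf zbar) K us" "w \<in> foldl tcone K (map A us)"
    "ws \<in> rnormal (foldl tcone K (map A us)) w" "gf zbar + adjoint A ws = 0"
    using exact_penalty_critical_chain[OF A K] by blast
  then show ?thesis
    unfolding critical_chain_iff
    by (intro exI[of _ us] exI[of _ w] exI[of _ ws]) (simp add: hlincone_def htcone_def A_def K_def)
qed

end
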